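(* Let $q\ge 2$ and $n,k\in\mathbb{N}$ with $2k\le n$. Suppose there is a function $b:\binom{[2k]}{k}\to A^n$ such that the sets $b(E)[E]$, for $E\in\binom{[2k]}{k}$, are pairwise disjoint. Then there exists $h\in F(n,q)$ having no trivial coordinate function and such that $\kappa^{\min}(h)\ge k$.
   Context: Let $q\ge 2$, $A=\{0,1,\dots,q-1\}$, $[n]=\{1,\dots,n\}$, and let $F(n,q)$ be the set of all maps $A^n\to A^n$. For $f\in F(m,q)$ and $i\in[m]$, $f_i$ is the $i$-th coordinate function and $f^i(x)=(x_1,\dots,x_{i-1},f_i(x),x_{i+1},\dots,x_m)$; for a word $w=(w_1,\dots,w_t)$ over $[m]$, $f^w=f^{w_t}\circ\cdots\circ f^{w_1}$. $\Pi([m])$ is the set of permutations of $[m]$ written as words $(w_1,\dots,w_m)$. $\mathrm{pr}_{[n]}:A^m\to A^n$ is the projection onto the first $n$ coordinates. For $m\ge n$, $(f,w)$ with $f\in F(m,q)$, $w\in\Pi([m])$ sequentializes $h\in F(n,q)$ if $\mathrm{pr}_{[n]}\circ f^w=h\circ\mathrm{pr}_{[n]}$. $\kappa^{\min}(h)$ is the smallest $k\ge 0$ such that there exist $f\in F(n+k,q)$ and $w\in\Pi([n+k])$ with $(f,w)$ sequentializing $h$. A coordinate function $h_i$ is trivial if $h_i(x)=x_i$ for all $x\in A^n$. For a set $I$, $\binom{I}{k}$ is the set of $k$-element subsets of $I$. For $x\in A^n$ and $I\subseteq[n]$, $x[I]=\{x'\in A^n : x'_j=x_j \text{ for all } j\in[n]\setminus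 I\}$. *)

theory Defs
  imports Main
begin

(* Coordinates are 0-indexed: the paper's [m] = {1..m} corresponds to {0..<m}.
   Points of A^m are lists of length m with entries in A = {0..<q}. *)

definition space :: "nat \<Rightarrow> nat \<Rightarrow> nat list set" where
  "space q m = {x. length x = m \<and> (\<forall>i<m. x ! i < q)}"

(* F(m,q): maps A^m -> A^m (only behaviour on A^m matters) *)
definition Fmaps :: "nat \<Rightarrow> nat \<Rightarrow> (nat list \<Rightarrow> nat list) set" where
  "Fmaps m q = {f. \<forall>x\<in>space q m. f x \<in> space q m}"

definition upd_coord :: "(nat list \<Rightarrow> nat list) \<Rightarrow> nat \<Rightarrow> nat list \<Rightarrow> nat list" where
  "upd_coord f i x = x[i := f x ! i]"

definition upd_word :: "(nat list \<Rightarrow> nat list) \<Rightarrow> nat list \<Rightarrow> nat list \<Rightarrow> nat list" where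
  "upd_word f w x = foldl (\<lambda>y i. upd_coord f i y) x w"

definition perm_words :: "nat \<Rightarrow> nat list set" where
  "perm_words m = {w. distinct w \<and> set w = {0..<m}}"

definition sequentializes ::
  "nat \<Rightarrow> nat \<Rightarrow> nat \<Rightarrow> (nat list \<Rightarrow> nat list) \<Rightarrow> nat list \<Rightarrow> (nat list \<Rightarrow> nat list) \<Rightarrow> bool" where
  "sequentializes q m n f w h \<longleftrightarrow>
     (\<forall>x\<in>space q m. take n (upd_word f w x) = h (take n x))"

definition kappa_min :: "nat \<Rightarrow> nat \<Rightarrow> (nat list \<Rightarrow> nat list) \<Rightarrow> nat" where
  "kappa_min q n h = (LEAST k. \<exists>f\<in>Fmaps (n + k) q. \<exists>w\<in>perm_words (n + k).
                         sequentializes q (n + k) n f w h)"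

definition trivial_coord :: "nat \<Rightarrow> nat \<Rightarrow> (nat list \<Rightarrow> nat list) \<Rightarrow> nat \<Rightarrow> bool" where
  "trivial_coord q n h i \<longleftrightarrow> (\<forall>x\<in>space q n. h x ! i = x ! i)"

definition box :: "nat \<Rightarrow> nat \<Rightarrow> nat list \<Rightarrow> nat set \<Rightarrow> nat list set" where
  "box q n x I = {x'\<in>space q n. \<forall>j<n. j \<notin> I \<longrightarrow> x' ! j = x ! j}"

end

theory Submission
  imports Defs "HOL-Library.FuncSet"
begin

text \<open>On each box \<open>b(E)[E]\<close> the map \<open>h\<close> overwrites \<open>E\<close> by a constant and copies the
free coordinates \<open>E\<close> onto the complementary half \<open>[2k] - E\<close>. In a sequentialization with
\<open>k'\<close> extra coordinates, some prefix \<open>u\<close> of the update word has written exactly \<open>k\<close>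
coordinates of \<open>[2k]\<close>; let \<open>E\<close> be this set. For inputs from the box \<open>b(E)[E]\<close>, after \<open>u\<close>
the first \<open>n\<close> coordinates of the state do not depend on the input: those written by \<open>u\<close>
are already final and lie outside \<open>[2k] - E\<close>, the others are still inputs outside \<open>E\<close>.
Yet the state must still determine the \<open>q^k\<close> possible values to be copied later onto
\<open>[2k] - E\<close>, so they are stored in the \<open>k'\<close> extra coordinates and \<open>q^k \<le> q^k'\<close>.\<close>

lemma space_eq_lists: "space q m = {xs. set xs \<subseteq> {0..<q} \<and> length xs = m}"
  unfolding space_def by (auto simp: in_set_conv_nth) (meson atLeastLessThan_iff nth_mem subsetD)

lemma finite_space: "finite (space q m)"
  unfolding space_eq_lists by (rule finite_lists_length_eq) simp

lemma card_space: "card (space q m) = q ^ m"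
  unfolding space_eq_lists by (simp add: card_lists_length_eq)

lemma box_subset_space: "box q n x E \<subseteq> space q n"
  unfolding box_def by blast

lemma append_zeros_space: "y \<in> space q n \<Longrightarrow> 0 < q \<Longrightarrow> y @ replicate k 0 \<in> space q (n + k)"
  unfolding space_def by (auto simp: nth_append)

lemma card_box:
  assumes x: "x \<in> space q n" and E: "E \<subseteq> {0..<n}"
  shows "card (box q n x E) = q ^ card E"
proof -
  have "bij_betw (\<lambda>y. restrict (nth y) E) (box q n x E) (PiE E (\<lambda>_. {0..<q}))"
  proof (rule bij_betw_byWitness[where f' = "\<lambda>g. map (\<lambda>i. if i \<in> E then g i else x ! i) [0..<n]"])
    show "\<forall>y\<in>box q n x E. map (\<lambda>i. if i \<in> E then restrict (nth y) E i else x ! i) [0..<n] = y"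
      by (auto simp: box_def space_def intro!: nth_equalityI)
    show "\<forall>g\<in>PiE E (\<lambda>_. {0..<q}). restrict (nth (map (\<lambda>i. if i \<in> E then g i else x ! i) [0..<n])) E = g"
      using E by (force simp: PiE_def extensional_def)
    show "(\<lambda>y. restrict (nth y) E) ` box q n x E \<subseteq> PiE E (\<lambda>_. {0..<q})"
      using E by (force simp: box_def space_def)
    show "(\<lambda>g. map (\<lambda>i. if i \<in> E then g i else x ! i) [0..<n]) ` PiE E (\<lambda>_. {0..<q}) \<subseteq> box q n x E"
      using x by (force simp: box_def space_def)
  qed
  then have "card (box q n x E) = card (PiE E (\<lambda>_. {0..<q}))"
    by (rule bij_betw_same_card)
  also have "\<dots> = q ^ card E"
    using E by (simp add: card_PiE finite_subset)
  finally show ?thesis .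
qed

lemma upd_word_Nil [simp]: "upd_word f [] x = x"
  unfolding upd_word_def by simp

lemma upd_word_Cons [simp]: "upd_word f (a # w) x = upd_word f w (upd_coord f a x)"
  unfolding upd_word_def by simp

lemma upd_word_append: "upd_word f (u @ v) x = upd_word f v (upd_word f u x)"
  unfolding upd_word_def by simp

lemma length_upd_word [simp]: "length (upd_word f w x) = length x"
  by (induction w arbitrary: x) (auto simp: upd_coord_def)

lemma upd_word_nth_notin: "i \<notin> set w \<Longrightarrow> upd_word f w x ! i = x ! i"
  by (induction w arbitrary: x) (auto simp: upd_coord_def)

lemma upd_word_space:
  assumes "f \<in> Fmaps m q" "x \<in> space q m" "set w \<subseteq> {0..<m}"
  shows "upd_word f w x \<in> space q m"
  using assms(2,3)
proof (induction w arbitrary: x)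
  case (Cons a w)
  have "f x \<in> space q m"
    using assms(1) Cons.prems unfolding Fmaps_def by auto
  then have "upd_coord f a x \<in> space q m"
    using Cons.prems unfolding upd_coord_def space_def by (auto simp: nth_list_update)
  then show ?case
    using Cons by simp
qed simp

lemma upd_word_parallel:
  assumes "distinct w" "set w \<subseteq> {0..<length x}"
    and "\<And>i y z. i \<in> set w \<Longrightarrow> length y = length z \<Longrightarrow> (\<forall>j. j \<notin> set w \<longrightarrow> y ! j = z ! j)
           \<Longrightarrow> f y ! i = f z ! i"
  shows "upd_word f w x = map (\<lambda>i. if i \<in> set w then f x ! i else x ! i) [0..<length x]"
  using assms
proof (induction w arbitrary: x)
  case Nil
  then show ?case
    by (simp add: map_nth)
next
  case (Cons a w)
  define x' where "x' = x[a := f x ! a]"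
  have indep: "f y ! i = f z ! i"
    if "i \<in> set w" "length y = length z" "\<forall>j. j \<notin> set w \<longrightarrow> y ! j = z ! j" for i y z
    using that by (intro Cons.prems(3)) auto
  have "upd_word f w x' = map (\<lambda>i. if i \<in> set w then f x' ! i else x' ! i) [0..<length x']"
  proof (rule Cons.IH)
    show "set w \<subseteq> {0..<length x'}"
      using Cons.prems(2) by (simp add: x'_def)
    show "distinct w"
      using Cons.prems(1) by simp
    show "f y ! i = f z ! i"
      if "i \<in> set w" "length y = length z" "\<forall>j. j \<notin> set w \<longrightarrow> y ! j = z ! j" for i y z
      using that by (rule indep)
  qed
  moreover have "f x' ! i = f x ! i" if "i \<in> set w" for i
    using that by (intro Cons.prems(3)) (auto simp: x'_def)
  moreover have "length x' = length x"
    by (simp add: x'_def)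
  moreover have "upd_word f (a # w) x = upd_word f w x'"
    by (simp add: upd_coord_def x'_def)
  ultimately show ?case
    using Cons.prems(1,2) by (auto simp: x'_def nth_list_update intro!: nth_equalityI)
qed

lemma exists_take_card_Int:
  assumes "j \<le> card (set w \<inter> A)"
  shows "\<exists>p\<le>length w. card (set (take p w) \<inter> A) = j"
  using assms
proof (induction w arbitrary: j rule: rev_induct)
  case (snoc a w)
  show ?case
  proof (cases "j \<le> card (set w \<inter> A)")
    case True
    then obtain p where "p \<le> length w" "card (set (take p w) \<inter> A) = j"
      using snoc.IH by blast
    then show ?thesis
      by (intro exI[of _ p]) auto
  next
    case False
    have "card (set (w @ [a]) \<inter> A) \<le> Suc (card (set w \<inter> A))"
      by (simp add: Int_insert_left card_insert_if)
    then have "card (set (take (length (w @ [a])) (w @ [a])) \<inter> A) = j"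
      using False snoc.prems by simp
    then show ?thesis
      by blast
  qed
qed simp

text \<open>The standard sequentialization with \<open>n\<close> extra coordinates: first copy the input into
them, then compute each original coordinate from the copy.\<close>

definition copy_then_compute :: "nat \<Rightarrow> (nat list \<Rightarrow> nat list) \<Rightarrow> nat list \<Rightarrow> nat list" where
  "copy_then_compute n g y = map (\<lambda>i. if i < n then g (drop n y) ! i else y ! (i - n)) [0..<n + n]"

lemma copy_phase:
  assumes len: "length x = n + n"
  shows "upd_word (copy_then_compute n g) [n..<n + n] x = take n x @ take n x"
proof -
  have "upd_word (copy_then_compute n g) [n..<n + n] x
      = map (\<lambda>i. if i \<in> set [n..<n + n] then copy_then_compute n g x ! i else x ! i) [0..<length x]"
  proof (rule upd_word_parallel)
    fix i and y z :: "nat list"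
    assume "i \<in> set [n..<n + n]" "length y = length z" "\<forall>j. j \<notin> set [n..<n + n] \<longrightarrow> y ! j = z ! j"
    then show "copy_then_compute n g y ! i = copy_then_compute n g z ! i"
      by (auto simp: copy_then_compute_def)
  qed (use len in auto)
  also have "\<dots> = take n x @ take n x"
    using len by (auto simp: copy_then_compute_def nth_append intro!: nth_equalityI)
  finally show ?thesis .
qed

lemma compute_phase:
  assumes len: "length x = n + n" and g: "length (g (drop n x)) = n"
  shows "take n (upd_word (copy_then_compute n g) [0..<n] x) = g (drop n x)"
proof -
  have "upd_word (copy_then_compute n g) [0..<n] x
      = map (\<lambda>i. if i \<in> set [0..<n] then copy_then_compute n g x ! i else x ! i) [0..<length x]"
  proof (rule upd_word_parallel)
    fix i and y z :: "nat list"
    assume "i \<in> set [0..<n]" "length y = length z" "\<forall>j. j \<notin> set [0..<n] \<longrightarrow> y ! j = z ! j"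
    moreover from this have "drop n y = drop n z"
      by (intro nth_equalityI) auto
    ultimately show "copy_then_compute n g y ! i = copy_then_compute n g z ! i"
      by (simp add: copy_then_compute_def)
  qed (use len in auto)
  then show ?thesis
    using len g by (auto simp: copy_then_compute_def intro!: nth_equalityI)
qed

lemma sequentialization_exists:
  assumes g: "g \<in> Fmaps n q"
  shows "\<exists>f\<in>Fmaps (n + n) q. \<exists>w\<in>perm_words (n + n). sequentializes q (n + n) n f w g"
proof (intro bexI)
  have g_space: "g (drop n y) \<in> space q n" if "y \<in> space q (n + n)" for y
    using that g unfolding Fmaps_def space_def by auto
  show "copy_then_compute n g \<in> Fmaps (n + n) q"
    using g_space unfolding Fmaps_def copy_then_compute_def space_def by auto
  show "[n..<n + n] @ [0..<n] \<in> perm_words (n + n)"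
    unfolding perm_words_def by auto
  show "sequentializes q (n + n) n (copy_then_compute n g) ([n..<n + n] @ [0..<n]) g"
    unfolding sequentializes_def
  proof
    fix x assume x: "x \<in> space q (n + n)"
    then have len: "length x = n + n"
      by (simp add: space_def)
    have "length (g (take n x)) = n"
      using g_space[of "take n x @ take n x"] x by (simp add: space_def nth_append)
    then show "take n (upd_word (copy_then_compute n g) ([n..<n + n] @ [0..<n]) x) = g (take n x)"
      using len by (simp add: upd_word_append copy_phase compute_phase)
  qed
qed

lemma le_kappa_min:
  assumes "h \<in> Fmaps n q"
    and "\<And>k' f w. f \<in> Fmaps (n + k') q \<Longrightarrow> w \<in> perm_words (n + k')
           \<Longrightarrow> sequentializes q (n + k') n f w h \<Longrightarrow> k \<le> k'"
  shows "k \<le> kappa_min q n h"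
proof -
  let ?P = "\<lambda>k'. \<exists>f\<in>Fmaps (n + k') q. \<exists>w\<in>perm_words (n + k'). sequentializes q (n + k') n f w h"
  have "?P n"
    using sequentialization_exists[OF assms(1)] .
  then have "?P (Least ?P)"
    by (rule LeastI)
  then show ?thesis
    unfolding kappa_min_def using assms(2) by blast
qed

definition half_subsets :: "nat \<Rightarrow> nat set set" where
  "half_subsets k = {E. E \<subseteq> {0..<2*k} \<and> card E = k}"

definition pairing :: "nat \<Rightarrow> nat set \<Rightarrow> nat \<Rightarrow> nat" where
  "pairing k E = (SOME \<sigma>. bij_betw \<sigma> ({0..<2*k} - E) E)"

lemma pairing_bij:
  assumes "E \<in> half_subsets k"
  shows "bij_betw (pairing k E) ({0..<2*k} - E) E"
proof -
  have E: "E \<subseteq> {0..<2*k}" "card E = k"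
    using assms unfolding half_subsets_def by auto
  then have "card ({0..<2*k} - E) = card E"
    by (simp add: card_Diff_subset finite_subset)
  moreover have "finite E"
    using E(1) finite_subset by blast
  ultimately obtain \<sigma> where "bij_betw \<sigma> ({0..<2*k} - E) E"
    using finite_same_card_bij[of "{0..<2*k} - E" E] by auto
  then show ?thesis
    unfolding pairing_def by (rule someI[where P = "\<lambda>\<sigma>. bij_betw \<sigma> _ _"])
qed

lemma Suc_mod_neq: "(a::nat) < q \<Longrightarrow> 2 \<le> q \<Longrightarrow> Suc a mod q \<noteq> a"
  by (cases "Suc a = q") auto

locale box_packing =
  fixes q n k :: nat and b :: "nat set \<Rightarrow> nat list"
  assumes two_le_q: "2 \<le> q" and two_k_le_n: "2 * k \<le> n"
    and centre_space: "E \<in> half_subsets k \<Longrightarrow> b E \<in> space q n"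
    and boxes_disjoint: "E1 \<in> half_subsets k \<Longrightarrow> E2 \<in> half_subsets k \<Longrightarrow> E1 \<noteq> E2
           \<Longrightarrow> box q n (b E1) E1 \<inter> box q n (b E2) E2 = {}"
begin

text \<open>The shift \<open>Suc _ mod q\<close> only makes every coordinate function nontrivial; copying \<open>E\<close>
onto its complement in \<open>[2k]\<close> is what forces \<open>k\<close> extra coordinates.\<close>

definition box_map :: "nat set \<Rightarrow> nat list \<Rightarrow> nat list" where
  "box_map E y = map (\<lambda>i. if i \<in> E then Suc (b E ! i) mod q
      else if i < 2*k then y ! pairing k E i else Suc (y ! i) mod q) [0..<n]"

definition hard_map :: "nat list \<Rightarrow> nat list" where
  "hard_map y = (if \<exists>E\<in>half_subsets k. y \<in> box q n (b E) E
     then box_map (SOME E. E \<in> half_subsets k \<and> y \<in> box q n (b E) E) y else y)"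

lemma centre_in_box: "E \<in> half_subsets k \<Longrightarrow> b E \<in> box q n (b E) E"
  using centre_space unfolding box_def by auto

lemma hard_map_on_box:
  assumes E: "E \<in> half_subsets k" and y: "y \<in> box q n (b E) E"
  shows "hard_map y = box_map E y"
proof -
  define E' where "E' = (SOME E. E \<in> half_subsets k \<and> y \<in> box q n (b E) E)"
  have "E' \<in> half_subsets k \<and> y \<in> box q n (b E') E'"
    unfolding E'_def by (rule someI_ex) (use E y in blast)
  then have "E' = E"
    using boxes_disjoint[of E' E] E y by blast
  then show ?thesis
    unfolding hard_map_def using E y by (auto simp: E'_def)
qed

lemma box_map_space:
  assumes E: "E \<in> half_subsets k" and y: "y \<in> space q n"
  shows "box_map E y \<in> space q n"
proof -
  have "y ! pairing k E i < q" if "i < 2*k" "i \<notin> E" for i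
  proof -
    have "pairing k E i \<in> E"
      using that pairing_bij[OF E] by (auto simp: bij_betw_def)
    then have "pairing k E i < n"
      using E two_k_le_n by (auto simp: half_subsets_def)
    then show ?thesis
      using y unfolding space_def by auto
  qed
  then show ?thesis
    using two_le_q by (auto simp: box_map_def space_def)
qed

lemma hard_map_Fmaps: "hard_map \<in> Fmaps n q"
  unfolding Fmaps_def
proof (intro CollectI ballI)
  fix y assume y: "y \<in> space q n"
  show "hard_map y \<in> space q n"
  proof (cases "\<exists>E\<in>half_subsets k. y \<in> box q n (b E) E")
    case True
    then obtain E where E: "E \<in> half_subsets k" and "y \<in> box q n (b E) E"
      by blast
    then have "hard_map y = box_map E y"
      by (rule hard_map_on_box)
    then show ?thesis
      using box_map_space[OF E y] by simp
  next
    case False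
    then show ?thesis
      using y unfolding hard_map_def by simp
  qed
qed

lemma hard_map_nontrivial:
  assumes i: "i < n"
  shows "\<not> trivial_coord q n hard_map i"
proof -
  define E where "E = (if k \<le> i \<and> i < 2*k then {k..<2*k} else {0..<k})"
  have E: "E \<in> half_subsets k"
    unfolding E_def half_subsets_def by auto
  have "i \<in> E \<or> 2*k \<le> i"
    unfolding E_def by auto
  then have "hard_map (b E) ! i = Suc (b E ! i) mod q"
    using i hard_map_on_box[OF E centre_in_box[OF E]] by (auto simp: box_map_def)
  moreover have "b E ! i < q"
    using centre_space[OF E] i unfolding space_def by auto
  ultimately have "hard_map (b E) ! i \<noteq> b E ! i"
    using Suc_mod_neq two_le_q by simp
  then show ?thesis
    using centre_space[OF E] unfolding trivial_coord_def by blast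
qed

lemma box_map_inj_on:
  assumes E: "E \<in> half_subsets k"
  shows "inj_on (box_map E) (box q n (b E) E)"
proof
  fix y y' assume y: "y \<in> box q n (b E) E" and y': "y' \<in> box q n (b E) E"
    and eq: "box_map E y = box_map E y'"
  show "y = y'"
  proof (rule nth_equalityI)
    show "length y = length y'"
      using y y' by (simp add: box_def space_def)
  next
    fix i assume "i < length y"
    then have i: "i < n"
      using y by (simp add: box_def space_def)
    show "y ! i = y' ! i"
    proof (cases "i \<in> E")
      case True
      then obtain c where c: "c \<in> {0..<2*k} - E" "pairing k E c = i"
        using pairing_bij[OF E] unfolding bij_betw_def by (metis imageE)
      then have "c < n"
        using two_k_le_n by simp
      then have "box_map E y ! c = y ! i" "box_map E y' ! c = y' ! i"
        using c by (simp_all add: box_map_def)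
      then show ?thesis
        using eq by simp
    next
      case False
      then show ?thesis
        using i y y' by (simp add: box_def)
    qed
  qed
qed

lemma box_map_nth_outside_complement:
  assumes y: "y \<in> box q n (b E) E" and y': "y' \<in> box q n (b E) E"
    and i: "i < n" "i \<notin> {0..<2*k} - E"
  shows "box_map E y ! i = box_map E y' ! i"
  using assms by (auto simp: box_map_def box_def)

lemma padded_space: "y \<in> box q n x E \<Longrightarrow> y @ replicate k' 0 \<in> space q (n + k')"
  using box_subset_space append_zeros_space two_le_q by fastforce

lemma box_map_by_suffix:
  assumes seq: "sequentializes q (n + k') n f (u @ v) hard_map"
    and E: "E \<in> half_subsets k" and y: "y \<in> box q n (b E) E"
  shows "take n (upd_word f v (upd_word f u (y @ replicate k' 0))) = box_map E y"
proof -
  have "length y = n"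
    using y by (simp add: box_def space_def)
  then have "take n (upd_word f (u @ v) (y @ replicate k' 0)) = hard_map y"
    using seq padded_space[OF y] unfolding sequentializes_def by auto
  then show ?thesis
    using hard_map_on_box[OF E y] by (simp add: upd_word_append)
qed

lemma prefix_state_take_eq:
  assumes seq: "sequentializes q (n + k') n f (u @ v) hard_map" and uv: "distinct (u @ v)"
    and E: "E \<in> half_subsets k" "E = set u \<inter> {0..<2*k}"
    and y: "y \<in> box q n (b E) E" and y': "y' \<in> box q n (b E) E"
  shows "take n (upd_word f u (y @ replicate k' 0)) = take n (upd_word f u (y' @ replicate k' 0))"
proof (rule nth_equalityI)
  have len: "length z = n" if "z \<in> box q n (b E) E" for z
    using that by (simp add: box_def space_def)
  show "length (take n (upd_word f u (y @ replicate k' 0))) = length (take n (upd_word f u (y' @ replicate k' 0)))"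
    using len[OF y] len[OF y'] by simp
  fix i assume "i < length (take n (upd_word f u (y @ replicate k' 0)))"
  then have i: "i < n"
    using len[OF y] by simp
  show "take n (upd_word f u (y @ replicate k' 0)) ! i = take n (upd_word f u (y' @ replicate k' 0)) ! i"
  proof (cases "i \<in> set u")
    case True
    then have "i \<notin> set v"
      using uv by auto
    have "upd_word f u (z @ replicate k' 0) ! i = box_map E z ! i" if "z \<in> box q n (b E) E" for z
    proof -
      have "upd_word f u (z @ replicate k' 0) ! i = upd_word f v (upd_word f u (z @ replicate k' 0)) ! i"
        using \<open>i \<notin> set v\<close> by (simp add: upd_word_nth_notin)
      also have "\<dots> = box_map E z ! i"
        using box_map_by_suffix[OF seq E(1) that] i by (metis nth_take)
      finally show ?thesis .
    qed
    moreover have "box_map E y ! i = box_map E y' ! i"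
      using True i y y' E(2) by (intro box_map_nth_outside_complement) auto
    ultimately show ?thesis
      using i y y' by simp
  next
    case False
    then have "upd_word f u (z @ replicate k' 0) ! i = b E ! i" if "z \<in> box q n (b E) E" for z
      using that i len[OF that] E(2) unfolding box_def by (simp add: upd_word_nth_notin nth_append)
    then show ?thesis
      using i y y' by simp
  qed
qed

lemma prefix_state_drop_inj_on:
  assumes seq: "sequentializes q (n + k') n f (u @ v) hard_map" and uv: "distinct (u @ v)"
    and E: "E \<in> half_subsets k" "E = set u \<inter> {0..<2*k}"
  shows "inj_on (\<lambda>y. drop n (upd_word f u (y @ replicate k' 0))) (box q n (b E) E)"
proof
  fix y y' assume y: "y \<in> box q n (b E) E" and y': "y' \<in> box q n (b E) E"
    and eq: "drop n (upd_word f u (y @ replicate k' 0)) = drop n (upd_word f u (y' @ replicate k' 0))"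
  have "upd_word f u (y @ replicate k' 0) = upd_word f u (y' @ replicate k' 0)"
    using prefix_state_take_eq[OF seq uv E y y'] eq by (metis append_take_drop_id)
  then have "box_map E y = box_map E y'"
    using box_map_by_suffix[OF seq E(1) y] box_map_by_suffix[OF seq E(1) y'] by simp
  then show "y = y'"
    using box_map_inj_on[OF E(1)] y y' unfolding inj_on_def by blast
qed

lemma extra_coordinates_lower_bound:
  assumes f: "f \<in> Fmaps (n + k') q" and w: "w \<in> perm_words (n + k')"
    and seq: "sequentializes q (n + k') n f w hard_map"
  shows "k \<le> k'"
proof -
  have w_distinct: "distinct w" and w_set: "set w = {0..<n + k'}"
    using w unfolding perm_words_def by auto
  have "k \<le> card (set w \<inter> {0..<2*k})"
    using w_set two_k_le_n by (simp add: Int_absorb1)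
  then obtain p where p: "card (set (take p w) \<inter> {0..<2*k}) = k"
    using exists_take_card_Int[of k w "{0..<2*k}"] by blast
  define u v E where "u = take p w" and "v = drop p w" and "E = set u \<inter> {0..<2*k}"
  have E: "E \<in> half_subsets k"
    using p unfolding half_subsets_def E_def u_def by auto
  have split: "sequentializes q (n + k') n f (u @ v) hard_map" "distinct (u @ v)"
    using seq w_distinct by (simp_all add: u_def v_def)
  have u_set: "set u \<subseteq> {0..<n + k'}"
    unfolding u_def w_set[symmetric] by (rule set_take_subset)
  have "(\<lambda>y. drop n (upd_word f u (y @ replicate k' 0))) ` box q n (b E) E \<subseteq> space q k'"
    using upd_word_space[OF f padded_space u_set] unfolding space_def by fastforce
  then have "card (box q n (b E) E) \<le> card (space q k')"
    using prefix_state_drop_inj_on[OF split E E_def] finite_space by (intro card_inj_on_le)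
  moreover have "E \<subseteq> {0..<n}" "card E = k"
    using E two_k_le_n by (auto simp: half_subsets_def)
  ultimately have "q ^ k \<le> q ^ k'"
    using card_box[OF centre_space[OF E]] by (simp add: card_space)
  then show ?thesis
    using two_le_q power_le_imp_le_exp by simp
qed

end

theorem mainTheorem4:
  fixes q n k :: nat and b :: "nat set \<Rightarrow> nat list"
  assumes "q \<ge> 2" and "2 * k \<le> n"
    and "\<forall>E. E \<subseteq> {0..<2*k} \<and> card E = k \<longrightarrow> b E \<in> space q n"
    and "\<forall>E1 E2. E1 \<subseteq> {0..<2*k} \<and> card E1 = k \<and> E2 \<subseteq> {0..<2*k} \<and> card E2 = k
            \<and> E1 \<noteq> E2 \<longrightarrow> box q n (b E1) E1 \<inter> box q n (b E2) E2 = {}"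
  shows "\<exists>h\<in>Fmaps n q. (\<forall>i<n. \<not> trivial_coord q n h i) \<and> kappa_min q n h \<ge> k"
proof -
  interpret box_packing q n k b
    using assms unfolding box_packing_def half_subsets_def by blast
  have "k \<le> kappa_min q n hard_map"
    using hard_map_Fmaps extra_coordinates_lower_bound by (rule le_kappa_min)
  then show ?thesis
    using hard_map_Fmaps hard_map_nontrivial by blast
qed

end
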